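(* Let $\alpha\in(0,1)$, $\mu\in\mathbb{R}$, $\sigma\ge 0$, and let $\mathcal{P}$ be the set of all probability distributions $\mathbb{P}$ on $\mathbb{R}$ (with finite second moment) under which a real random variable $\xi$ has mean $\mathbb{E}_{\mathbb{P}}[\xi]=\mu$ and variance $\mathbb{D}_{\mathbb{P}}[\xi]=\sigma^2$. For $\Theta\in\mathbb{R}$ and $\theta^0\in\mathbb{R}$, consider the affine loss $\phi(\xi)=\Theta\xi+\theta^0$. Then the worst-case conditional value-at-risk $$\sup_{\mathbb{P}\in\mathcal{P}}\ \mathbb{P}\text{-}\mathrm{CVaR}_\alpha\big(\phi(\xi)\big)$$ equals the optimal value of the second-order cone program $$\inf_{\beta,e,q,z,s\in\mathbb{R}}\ \beta+\frac{1}{1-\alpha}(e+s)$$ subject to $$e-\theta^0+\beta+q-\Theta\mu-z>0,\qquad e\ge 0,\qquad z>0,\qquad \left\|\begin{pmatrix} q\\ \Theta\sigma\\ z-s\end{pmatrix}\right\|_2\le z+s.$$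
   Context: For a distribution $\mathbb{P}$ and an integrable random variable $X$, the conditional value-at-risk at level $\alpha\in(0,1)$ is $\mathbb{P}\text{-}\mathrm{CVaR}_\alpha(X)=\inf_{\beta\in\mathbb{R}}\big\{\beta+\frac{1}{1-\alpha}\mathbb{E}_{\mathbb{P}}[(X-\beta)^+]\big\}$, where $(x)^+=\max\{x,0\}$. $\|\cdot\|_2$ denotes the Euclidean norm on $\mathbb{R}^3$; $\beta,e,q,z,s$ are auxiliary scalar decision variables. *)

theory Defs
  imports "HOL-Probability.Probability"
begin

text \<open>Conditional value-at-risk of the random variable X (a real function on the sample
  space of M) at level alpha, via the Rockafellar--Uryasev formula.\<close>
definition CVaR :: "real measure \<Rightarrow> real \<Rightarrow> (real \<Rightarrow> real) \<Rightarrow> real" where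
  "CVaR M \<alpha> X = (INF \<beta>::real. \<beta> + (1 / (1 - \<alpha>)) * (\<integral>x. max (X x - \<beta>) 0 \<partial>M))"

text \<open>Probability distributions on the real line (Borel sets) with finite second moment,
  under which xi (the identity) has mean mu and variance sigma squared.\<close>
definition moment_set :: "real \<Rightarrow> real \<Rightarrow> real measure set" where
  "moment_set \<mu> \<sigma> = {P. prob_space P \<and> sets P = sets borel \<and>
      integrable P (\<lambda>x. x\<^sup>2) \<and> integrable P (\<lambda>x. x) \<and>
      (\<integral>x. x \<partial>P) = \<mu> \<and> (\<integral>x. (x - \<mu>)\<^sup>2 \<partial>P) = \<sigma>\<^sup>2}"

definition socp_feasible :: "real \<Rightarrow> real \<Rightarrow> real \<Rightarrow> real \<Rightarrow> (real \<times> real \<times> real \<times> real \<times> real) set" where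
  "socp_feasible \<Theta> \<theta>0 \<mu> \<sigma> = {(\<beta>, e, q, z, s).
      e - \<theta>0 + \<beta> + q - \<Theta> * \<mu> - z > 0 \<and> e \<ge> 0 \<and> z > 0 \<and>
      norm (vector [q, \<Theta> * \<sigma>, z - s] :: real^3) \<le> z + s}"

end

theory Submission
  imports Defs
begin

text \<open>Both sides equal \<open>V = \<Theta>\<mu> + \<theta>0 + \<bar>\<Theta>\<sigma>\<bar> sqrt (\<alpha> / (1 - \<alpha>))\<close>.
  For weak duality, a feasible point gives the quadratic majorant
  \<open>max (\<Theta>\<xi> + \<theta>0 - \<beta>) 0 \<le> e + (\<Theta> (\<xi> - \<mu>) + q)\<^sup>2 / (4 z)\<close>, whose expectation only depends
  on the first two moments and is at most \<open>e + s\<close> by the (rotated) cone constraint.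
  The value \<open>V\<close> is attained by a two-point distribution putting mass \<open>1 - \<alpha>\<close> at
  \<open>\<mu> \<plusminus> \<sigma> sqrt (\<alpha> / (1 - \<alpha>))\<close> (on the side where the loss is large) and mass \<open>\<alpha>\<close> at
  \<open>\<mu> \<minusplus> \<sigma> sqrt ((1 - \<alpha>) / \<alpha>)\<close>, and it is approached by feasible points with \<open>e = 0\<close>, whose objective reduces
  to \<open>\<Theta>\<mu> + \<theta>0 + \<alpha> z + \<Theta>\<^sup>2\<sigma>\<^sup>2 / (4 (1 - \<alpha>) z)\<close> plus slack, minimised over \<open>z > 0\<close> by AM-GM.\<close>

lemma SUP_INF_eq_by_weak_duality:
  fixes f g :: "_ \<Rightarrow> real"
  assumes weak: "\<And>x y. x \<in> A \<Longrightarrow> y \<in> B \<Longrightarrow> f x \<le> g y"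
    and attained: "x0 \<in> A" "V \<le> f x0"
    and approached: "\<And>\<epsilon>. \<epsilon> > 0 \<Longrightarrow> \<exists>y \<in> B. g y < V + \<epsilon>"
  shows "(SUP x \<in> A. f x) = V" and "(INF y \<in> B. g y) = V"
proof -
  have "B \<noteq> {}" using approached[of 1] by auto
  have upper: "f x \<le> V" if "x \<in> A" for x
  proof (rule field_le_epsilon)
    fix \<epsilon> :: real assume "\<epsilon> > 0"
    then obtain y where "y \<in> B" "g y < V + \<epsilon>" using approached by blast
    then show "f x \<le> V + \<epsilon>" using weak[OF \<open>x \<in> A\<close>] by force
  qed
  have lower: "V \<le> g y" if "y \<in> B" for y
    using attained weak[OF _ that] by force
  have "(SUP x \<in> A. f x) \<le> V" using attained upper by (intro cSUP_least) auto
  moreover have "f x0 \<le> (SUP x \<in> A. f x)"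
    using attained upper by (intro cSUP_upper bdd_aboveI2) auto
  ultimately show "(SUP x \<in> A. f x) = V" using attained by linarith
  have "V \<le> (INF y \<in> B. g y)" using \<open>B \<noteq> {}\<close> lower by (intro cINF_greatest) auto
  moreover have "(INF y \<in> B. g y) \<le> V"
  proof (rule field_le_epsilon)
    fix \<epsilon> :: real assume "\<epsilon> > 0"
    then obtain y where "y \<in> B" "g y < V + \<epsilon>" using approached by blast
    moreover have "(INF y \<in> B. g y) \<le> g y"
      using \<open>y \<in> B\<close> lower by (intro cINF_lower bdd_belowI2) auto
    ultimately show "(INF y \<in> B. g y) \<le> V + \<epsilon>" by linarith
  qed
  ultimately show "(INF y \<in> B. g y) = V" by linarith
qed

lemma norm_vector_3: "norm (vector [a, b, c] :: real^3) = sqrt (a\<^sup>2 + b\<^sup>2 + c\<^sup>2)"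
  by (simp add: norm_vec_def L2_set_def sum_3)

lemma second_order_cone_iff_rotated:
  fixes q c z s :: real
  assumes "z > 0"
  shows "sqrt (q\<^sup>2 + c\<^sup>2 + (z - s)\<^sup>2) \<le> z + s \<longleftrightarrow> q\<^sup>2 + c\<^sup>2 \<le> 4 * z * s"
proof -
  have square: "(z + s)\<^sup>2 = (z - s)\<^sup>2 + 4 * z * s"
    by (simp add: power2_eq_square algebra_simps)
  show ?thesis
  proof
    assume "sqrt (q\<^sup>2 + c\<^sup>2 + (z - s)\<^sup>2) \<le> z + s"
    then show "q\<^sup>2 + c\<^sup>2 \<le> 4 * z * s" using square sqrt_le_D by fastforce
  next
    assume cone: "q\<^sup>2 + c\<^sup>2 \<le> 4 * z * s"
    then have "0 \<le> 4 * z * s" by (smt (verit) zero_le_power2)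
    then have "0 \<le> s" using \<open>z > 0\<close> by (simp add: zero_le_mult_iff)
    then show "sqrt (q\<^sup>2 + c\<^sup>2 + (z - s)\<^sup>2) \<le> z + s"
      using cone square \<open>z > 0\<close> by (intro real_le_lsqrt) auto
  qed
qed

lemma socp_feasible_iff:
  "(\<beta>, e, q, z, s) \<in> socp_feasible \<Theta> \<theta>0 \<mu> \<sigma> \<longleftrightarrow>
     e - \<theta>0 + \<beta> + q - \<Theta> * \<mu> - z > 0 \<and> e \<ge> 0 \<and> z > 0 \<and> q\<^sup>2 + (\<Theta> * \<sigma>)\<^sup>2 \<le> 4 * z * s"
  using second_order_cone_iff_rotated
  by (auto simp: socp_feasible_def norm_vector_3)

lemma CVaR_le:
  fixes X :: "real \<Rightarrow> real"
  assumes "prob_space M" and "integrable M X" and "0 \<le> \<alpha>" and "\<alpha> < 1"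
  shows "CVaR M \<alpha> X \<le> \<beta> + (1 / (1 - \<alpha>)) * (\<integral>x. max (X x - \<beta>) 0 \<partial>M)"
proof -
  interpret prob_space M by fact
  have "(\<integral>x. X x \<partial>M) \<le> b + (1 / (1 - \<alpha>)) * (\<integral>x. max (X x - b) 0 \<partial>M)" for b
  proof -
    have "(\<integral>x. X x \<partial>M) - b = (\<integral>x. X x - b \<partial>M)"
      using \<open>integrable M X\<close> by (simp add: prob_space)
    also have "\<dots> \<le> (\<integral>x. max (X x - b) 0 \<partial>M)"
      using \<open>integrable M X\<close> by (intro integral_mono) auto
    also have "\<dots> \<le> (1 / (1 - \<alpha>)) * (\<integral>x. max (X x - b) 0 \<partial>M)"
      using assms(3,4) mult_right_mono[of 1 "1 / (1 - \<alpha>)" "\<integral>x. max (X x - b) 0 \<partial>M"]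
      by simp
    finally show ?thesis by simp
  qed
  then show ?thesis
    unfolding CVaR_def by (intro cINF_lower bdd_belowI2) auto
qed

lemma moment_set_integrable_affine:
  assumes "P \<in> moment_set \<mu> \<sigma>"
  shows "integrable P (\<lambda>x. a * x + b)"
proof -
  interpret prob_space P using assms by (simp add: moment_set_def)
  show ?thesis using assms by (auto simp: moment_set_def)
qed

lemma moment_set_integral_affine_sq:
  assumes "P \<in> moment_set \<mu> \<sigma>"
  shows "integrable P (\<lambda>x. (a * (x - \<mu>) + b)\<^sup>2)"
    and "(\<integral>x. (a * (x - \<mu>) + b)\<^sup>2 \<partial>P) = a\<^sup>2 * \<sigma>\<^sup>2 + b\<^sup>2"
proof -
  interpret prob_space P using assms by (simp add: moment_set_def)
  have sq: "integrable P (\<lambda>x. x\<^sup>2)" and lin: "integrable P (\<lambda>x. x)"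
    and mean: "(\<integral>x. x \<partial>P) = \<mu>" and var: "(\<integral>x. (x - \<mu>)\<^sup>2 \<partial>P) = \<sigma>\<^sup>2"
    using assms by (auto simp: moment_set_def)
  have expand: "(a * (x - \<mu>) + b)\<^sup>2 = a\<^sup>2 * (x\<^sup>2 - 2 * \<mu> * x + \<mu>\<^sup>2) + 2 * a * b * (x - \<mu>) + b\<^sup>2"
    for x by (simp add: power2_eq_square algebra_simps)
  have centred: "(x - \<mu>)\<^sup>2 = x\<^sup>2 - 2 * \<mu> * x + \<mu>\<^sup>2" for x
    by (simp add: power2_eq_square algebra_simps)
  have isq: "integrable P (\<lambda>x. x\<^sup>2 - 2 * \<mu> * x + \<mu>\<^sup>2)"
    using sq lin by auto
  then show "integrable P (\<lambda>x. (a * (x - \<mu>) + b)\<^sup>2)"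
    unfolding expand using lin by auto
  have "(\<integral>x. x\<^sup>2 - 2 * \<mu> * x + \<mu>\<^sup>2 \<partial>P) = \<sigma>\<^sup>2"
    using var unfolding centred .
  moreover have "(\<integral>x. x - \<mu> \<partial>P) = 0"
    using lin mean by (simp add: prob_space)
  ultimately show "(\<integral>x. (a * (x - \<mu>) + b)\<^sup>2 \<partial>P) = a\<^sup>2 * \<sigma>\<^sup>2 + b\<^sup>2"
    unfolding expand using isq lin by (simp add: prob_space)
qed

lemma CVaR_affine_le_socp_objective:
  assumes P: "P \<in> moment_set \<mu> \<sigma>"
    and feasible: "(\<beta>, e, q, z, s) \<in> socp_feasible \<Theta> \<theta>0 \<mu> \<sigma>"
    and "0 \<le> \<alpha>" and "\<alpha> < 1"
  shows "CVaR P \<alpha> (\<lambda>\<xi>. \<Theta> * \<xi> + \<theta>0) \<le> \<beta> + (1 / (1 - \<alpha>)) * (e + s)"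
proof -
  have slack: "e - \<theta>0 + \<beta> + q - \<Theta> * \<mu> - z > 0" and "e \<ge> 0" and "z > 0"
    and cone: "q\<^sup>2 + (\<Theta> * \<sigma>)\<^sup>2 \<le> 4 * z * s"
    using feasible by (auto simp: socp_feasible_iff)
  interpret prob_space P using P by (simp add: moment_set_def)
  define majorant where "majorant x = e + (\<Theta> * (x - \<mu>) + q)\<^sup>2 / (4 * z)" for x
  have pointwise: "max (\<Theta> * x + \<theta>0 - \<beta>) 0 \<le> majorant x" for x
  proof -
    let ?u = "\<Theta> * (x - \<mu>) + q"
    have "0 \<le> (?u - 2 * z)\<^sup>2" by simp
    then have "?u - z \<le> ?u\<^sup>2 / (4 * z)"
      using \<open>z > 0\<close> by (simp add: field_simps power2_eq_square)
    moreover have "0 \<le> ?u\<^sup>2 / (4 * z)" using \<open>z > 0\<close> by simp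
    ultimately show ?thesis
      using slack \<open>e \<ge> 0\<close> by (simp add: majorant_def algebra_simps)
  qed
  have "(\<integral>x. max (\<Theta> * x + \<theta>0 - \<beta>) 0 \<partial>P) \<le> (\<integral>x. majorant x \<partial>P)"
    using pointwise moment_set_integrable_affine[OF P] moment_set_integral_affine_sq(1)[OF P]
    by (intro integral_mono) (auto simp: majorant_def)
  also have "\<dots> = e + ((\<Theta> * \<sigma>)\<^sup>2 + q\<^sup>2) / (4 * z)"
    using moment_set_integral_affine_sq[OF P, of \<Theta> q]
    by (simp add: majorant_def prob_space power_mult_distrib)
  also have "\<dots> \<le> e + s"
    using cone \<open>z > 0\<close> by (simp add: field_simps)
  finally have "(\<integral>x. max (\<Theta> * x + \<theta>0 - \<beta>) 0 \<partial>P) \<le> e + s" .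
  moreover have "CVaR P \<alpha> (\<lambda>\<xi>. \<Theta> * \<xi> + \<theta>0)
      \<le> \<beta> + (1 / (1 - \<alpha>)) * (\<integral>x. max (\<Theta> * x + \<theta>0 - \<beta>) 0 \<partial>P)"
    by (rule CVaR_le[OF prob_space_axioms moment_set_integrable_affine[OF P] assms(3,4)])
  moreover have "1 / (1 - \<alpha>) \<ge> 0" using \<open>\<alpha> < 1\<close> by simp
  ultimately show ?thesis
    by (smt (verit) mult_left_mono)
qed

definition two_point :: "real \<Rightarrow> real \<Rightarrow> real \<Rightarrow> real measure" where
  "two_point p a b = distr (measure_pmf (bernoulli_pmf p)) borel (\<lambda>c. if c then a else b)"

lemma prob_space_two_point: "prob_space (two_point p a b)"
  unfolding two_point_def
  by (rule prob_space.prob_space_distr[OF prob_space_measure_pmf]) simp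

lemma sets_two_point [simp]: "sets (two_point p a b) = sets borel"
  by (simp add: two_point_def)

lemma integrable_two_point:
  "f \<in> borel_measurable borel \<Longrightarrow> integrable (two_point p a b) (f :: real \<Rightarrow> real)"
  unfolding two_point_def
  by (subst integrable_distr_eq) (auto intro!: integrable_measure_pmf_finite)

lemma integral_two_point:
  fixes f :: "real \<Rightarrow> real"
  assumes "f \<in> borel_measurable borel" and "0 \<le> p" and "p \<le> 1"
  shows "(\<integral>x. f x \<partial>two_point p a b) = p * f a + (1 - p) * f b"
  unfolding two_point_def using assms
  by (subst integral_distr) auto

lemma two_point_in_moment_set:
  assumes "0 \<le> p" and "p \<le> 1"
    and "p * a + (1 - p) * b = \<mu>" and "p * (a - \<mu>)\<^sup>2 + (1 - p) * (b - \<mu>)\<^sup>2 = \<sigma>\<^sup>2"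
  shows "two_point p a b \<in> moment_set \<mu> \<sigma>"
  using assms prob_space_two_point
  by (simp add: moment_set_def integrable_two_point integral_two_point)

lemma CVaR_two_point_ge:
  assumes "X \<in> borel_measurable borel" and "0 \<le> \<alpha>" and "\<alpha> < 1"
  shows "X b \<le> CVaR (two_point \<alpha> a b) \<alpha> X"
  unfolding CVaR_def
proof (rule cINF_greatest)
  fix \<beta>
  have "(1 - \<alpha>) * (X b - \<beta>) \<le> \<alpha> * max (X a - \<beta>) 0 + (1 - \<alpha>) * max (X b - \<beta>) 0"
    using assms(2,3) by (intro add_increasing mult_left_mono) auto
  also have "\<dots> = (\<integral>x. max (X x - \<beta>) 0 \<partial>two_point \<alpha> a b)"
    using assms by (intro integral_two_point[symmetric]) auto
  finally show "X b \<le> \<beta> + (1 / (1 - \<alpha>)) * (\<integral>x. max (X x - \<beta>) 0 \<partial>two_point \<alpha> a b)"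
    using \<open>\<alpha> < 1\<close> by (simp add: field_simps)
qed simp

lemma CVaR_affine_worst_case_attained:
  assumes "0 < \<alpha>" and "\<alpha> < 1" and "\<sigma> \<ge> 0"
  shows "\<exists>P \<in> moment_set \<mu> \<sigma>.
           \<Theta> * \<mu> + \<theta>0 + \<bar>\<Theta> * \<sigma>\<bar> * sqrt (\<alpha> / (1 - \<alpha>)) \<le> CVaR P \<alpha> (\<lambda>\<xi>. \<Theta> * \<xi> + \<theta>0)"
proof -
  define k where "k = sqrt (\<alpha> / (1 - \<alpha>))"
  have "k > 0" using assms by (simp add: k_def)
  have k_sq: "(1 - \<alpha>) * k\<^sup>2 = \<alpha>" "\<alpha> / k\<^sup>2 = 1 - \<alpha>"
    using assms by (simp_all add: k_def)
  define d where "d = (if \<Theta> \<ge> 0 then \<sigma> else - \<sigma>)"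
  have "d\<^sup>2 = \<sigma>\<^sup>2" and "\<Theta> * d = \<bar>\<Theta> * \<sigma>\<bar>"
    using \<open>\<sigma> \<ge> 0\<close> by (auto simp: d_def abs_mult)
  define P where "P = two_point \<alpha> (\<mu> - d / k) (\<mu> + d * k)"
  have "\<alpha> * (\<mu> - d / k) + (1 - \<alpha>) * (\<mu> + d * k) = \<mu> + d * ((1 - \<alpha>) * k\<^sup>2 - \<alpha>) / k"
    using \<open>k > 0\<close> by (simp add: field_simps power2_eq_square)
  then have mean: "\<alpha> * (\<mu> - d / k) + (1 - \<alpha>) * (\<mu> + d * k) = \<mu>"
    using k_sq by simp
  have "\<alpha> * (\<mu> - d / k - \<mu>)\<^sup>2 + (1 - \<alpha>) * (\<mu> + d * k - \<mu>)\<^sup>2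
      = d\<^sup>2 * (\<alpha> / k\<^sup>2 + (1 - \<alpha>) * k\<^sup>2)"
    by (simp add: power_divide algebra_simps)
  then have variance: "\<alpha> * (\<mu> - d / k - \<mu>)\<^sup>2 + (1 - \<alpha>) * (\<mu> + d * k - \<mu>)\<^sup>2 = \<sigma>\<^sup>2"
    using k_sq \<open>d\<^sup>2 = \<sigma>\<^sup>2\<close> by simp
  have "P \<in> moment_set \<mu> \<sigma>"
    unfolding P_def using assms mean variance by (intro two_point_in_moment_set) auto
  moreover have "\<Theta> * (\<mu> + d * k) + \<theta>0 \<le> CVaR P \<alpha> (\<lambda>\<xi>. \<Theta> * \<xi> + \<theta>0)"
    unfolding P_def using assms by (intro CVaR_two_point_ge) auto
  moreover have "\<Theta> * (\<mu> + d * k) + \<theta>0 = \<Theta> * \<mu> + \<theta>0 + \<bar>\<Theta> * \<sigma>\<bar> * k"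
    using \<open>\<Theta> * d = \<bar>\<Theta> * \<sigma>\<bar>\<close> by (simp add: distrib_left mult.assoc[symmetric])
  ultimately show ?thesis
    unfolding k_def by auto
qed

lemma AM_GM_infimum_approx:
  fixes a b \<epsilon> :: real
  assumes "a > 0" and "b \<ge> 0" and "\<epsilon> > 0"
  obtains z where "z > 0" and "a * z + b / z < 2 * sqrt (a * b) + \<epsilon>"
proof (cases "b = 0")
  case True
  then show ?thesis
    using assms by (intro that[of "\<epsilon> / (2 * a)"]) auto
next
  case False
  define z where "z = sqrt (b / a)"
  have "z > 0" using assms False by (simp add: z_def)
  have "a * z = sqrt (a * b)" and "b / z = sqrt (a * b)"
    using assms False by (simp_all add: z_def real_sqrt_divide real_sqrt_mult field_simps)
  then show ?thesis
    using \<open>z > 0\<close> \<open>\<epsilon> > 0\<close> by (intro that[of z]) auto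
qed

lemma socp_objective_approaches:
  assumes "0 < \<alpha>" and "\<alpha> < 1" and "\<epsilon> > 0"
  shows "\<exists>p \<in> socp_feasible \<Theta> \<theta>0 \<mu> \<sigma>.
           (case p of (\<beta>, e, q, z, s) \<Rightarrow> \<beta> + (1 / (1 - \<alpha>)) * (e + s))
             < \<Theta> * \<mu> + \<theta>0 + \<bar>\<Theta> * \<sigma>\<bar> * sqrt (\<alpha> / (1 - \<alpha>)) + \<epsilon>"
proof -
  define c where "c = \<Theta> * \<sigma>"
  define m where "m = \<Theta> * \<mu> + \<theta>0"
  have "\<alpha> * (c\<^sup>2 / (4 * (1 - \<alpha>))) = (\<bar>c\<bar> / 2)\<^sup>2 * (\<alpha> / (1 - \<alpha>))"
    by (simp add: power_divide)
  then have "2 * sqrt (\<alpha> * (c\<^sup>2 / (4 * (1 - \<alpha>)))) = \<bar>c\<bar> * sqrt (\<alpha> / (1 - \<alpha>))"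
    by (simp only: real_sqrt_mult real_sqrt_abs)
  moreover obtain z where "z > 0"
    and z_near: "\<alpha> * z + (c\<^sup>2 / (4 * (1 - \<alpha>))) / z < 2 * sqrt (\<alpha> * (c\<^sup>2 / (4 * (1 - \<alpha>)))) + \<epsilon> / 2"
    by (rule AM_GM_infimum_approx[of \<alpha> "c\<^sup>2 / (4 * (1 - \<alpha>))" "\<epsilon> / 2"]) (use assms in auto)
  \<comment> \<open>this \<open>q\<close> minimises the objective for fixed \<open>z\<close>\<close>
  define q where "q = 2 * z * (1 - \<alpha>)"
  define s where "s = (q\<^sup>2 + c\<^sup>2) / (4 * z)"
  define \<beta> where "\<beta> = m + z - q + \<epsilon> / 2"
  have "(\<beta>, 0, q, z, s) \<in> socp_feasible \<Theta> \<theta>0 \<mu> \<sigma>"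
    using \<open>z > 0\<close> \<open>\<epsilon> > 0\<close> by (simp add: socp_feasible_iff \<beta>_def m_def s_def c_def)
  moreover have "\<beta> + (1 / (1 - \<alpha>)) * (0 + s) = m + \<epsilon> / 2 + (\<alpha> * z + (c\<^sup>2 / (4 * (1 - \<alpha>))) / z)"
    using \<open>z > 0\<close> assms(1,2)
    by (simp add: \<beta>_def s_def q_def field_simps power2_eq_square)
  ultimately show ?thesis
    using z_near unfolding m_def c_def by (intro bexI[of _ "(\<beta>, 0, q, z, s)"]) auto
qed

theorem lemma1:
  fixes \<alpha> \<mu> \<sigma> \<Theta> \<theta>0 :: real
  assumes "0 < \<alpha>" and "\<alpha> < 1" and "\<sigma> \<ge> 0"
  shows "(SUP P \<in> moment_set \<mu> \<sigma>. CVaR P \<alpha> (\<lambda>\<xi>. \<Theta> * \<xi> + \<theta>0))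
       = (INF (\<beta>, e, q, z, s) \<in> socp_feasible \<Theta> \<theta>0 \<mu> \<sigma>. \<beta> + (1 / (1 - \<alpha>)) * (e + s))"
proof -
  let ?V = "\<Theta> * \<mu> + \<theta>0 + \<bar>\<Theta> * \<sigma>\<bar> * sqrt (\<alpha> / (1 - \<alpha>))"
  have weak: "CVaR P \<alpha> (\<lambda>\<xi>. \<Theta> * \<xi> + \<theta>0) \<le> (\<lambda>(\<beta>, e, q, z, s). \<beta> + (1 / (1 - \<alpha>)) * (e + s)) p"
    if "P \<in> moment_set \<mu> \<sigma>" and "p \<in> socp_feasible \<Theta> \<theta>0 \<mu> \<sigma>" for P p
    using CVaR_affine_le_socp_objective[OF that(1) _ _ \<open>\<alpha> < 1\<close>] that(2) assms(1)
    by (cases p) auto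
  obtain P where "P \<in> moment_set \<mu> \<sigma>" and "?V \<le> CVaR P \<alpha> (\<lambda>\<xi>. \<Theta> * \<xi> + \<theta>0)"
    using CVaR_affine_worst_case_attained[OF assms] by blast
  note duality = SUP_INF_eq_by_weak_duality
    [where f = "\<lambda>P. CVaR P \<alpha> (\<lambda>\<xi>. \<Theta> * \<xi> + \<theta>0)"
      and g = "\<lambda>(\<beta>, e, q, z, s). \<beta> + (1 / (1 - \<alpha>)) * (e + s)",
     OF weak this socp_objective_approaches[OF assms(1,2)]]
  show ?thesis using duality by simp
qed

end
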